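(* Let $I$ be an inverse semigroup [respectively, inverse monoid], not necessarily finitely generated. If $\Sigma_1$ and $\Sigma_2$ are two semigroup [monoid] generating sets of $I$, with corresponding idempotent problems $L_1$ and $L_2$, then the syntactic semigroups $M^+(L_1)$ and $M^+(L_2)$ are isomorphic [respectively, the syntactic monoids $M(L_1)$ and $M(L_2)$ are isomorphic]. *)

theory Defs
  imports "HOL-Algebra.Group"
begin

text \<open>Algebraic structures are HOL-Algebra records (type 'a monoid); for semigroups
  the field one is simply ignored.\<close>

definition is_semigroup :: "('a, 'm) monoid_scheme \<Rightarrow> bool" where
  "is_semigroup S \<longleftrightarrow>
     (\<forall>x\<in>carrier S. \<forall>y\<in>carrier S. x \<otimes>\<^bsub>S\<^esub> y \<in> carrier S) \<and>
     (\<forall>x\<in>carrier S. \<forall>y\<in>carrier S. \<forall>z\<in>carrier S.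
        (x \<otimes>\<^bsub>S\<^esub> y) \<otimes>\<^bsub>S\<^esub> z = x \<otimes>\<^bsub>S\<^esub> (y \<otimes>\<^bsub>S\<^esub> z))"

definition inverse_semigroup :: "('a, 'm) monoid_scheme \<Rightarrow> bool" where
  "inverse_semigroup S \<longleftrightarrow> is_semigroup S \<and>
     (\<forall>x\<in>carrier S. \<exists>!y. y \<in> carrier S \<and>
        x \<otimes>\<^bsub>S\<^esub> y \<otimes>\<^bsub>S\<^esub> x = x \<and> y \<otimes>\<^bsub>S\<^esub> x \<otimes>\<^bsub>S\<^esub> y = y)"

definition inverse_monoid :: "('a, 'm) monoid_scheme \<Rightarrow> bool" where
  "inverse_monoid S \<longleftrightarrow> monoid S \<and>
     (\<forall>x\<in>carrier S. \<exists>!y. y \<in> carrier S \<and>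
        x \<otimes>\<^bsub>S\<^esub> y \<otimes>\<^bsub>S\<^esub> x = x \<and> y \<otimes>\<^bsub>S\<^esub> x \<otimes>\<^bsub>S\<^esub> y = y)"

definition idempotent_in :: "('a, 'm) monoid_scheme \<Rightarrow> 'a \<Rightarrow> bool" where
  "idempotent_in S e \<longleftrightarrow> e \<in> carrier S \<and> e \<otimes>\<^bsub>S\<^esub> e = e"

definition words_plus :: "'b set \<Rightarrow> 'b list set" where
  "words_plus \<Sigma> = {w. w \<noteq> [] \<and> set w \<subseteq> \<Sigma>}"

definition words_star :: "'b set \<Rightarrow> 'b list set" where
  "words_star \<Sigma> = {w. set w \<subseteq> \<Sigma>}"

fun sg_eval :: "('a, 'm) monoid_scheme \<Rightarrow> ('b \<Rightarrow> 'a) \<Rightarrow> 'b list \<Rightarrow> 'a" where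
  "sg_eval S \<pi> [] = undefined"
| "sg_eval S \<pi> [a] = \<pi> a"
| "sg_eval S \<pi> (a # b # w) = \<pi> a \<otimes>\<^bsub>S\<^esub> sg_eval S \<pi> (b # w)"

definition mon_eval :: "('a, 'm) monoid_scheme \<Rightarrow> ('b \<Rightarrow> 'a) \<Rightarrow> 'b list \<Rightarrow> 'a" where
  "mon_eval S \<pi> w = foldr (\<lambda>a x. \<pi> a \<otimes>\<^bsub>S\<^esub> x) w \<one>\<^bsub>S\<^esub>"

definition sg_generating :: "('a, 'm) monoid_scheme \<Rightarrow> 'b set \<Rightarrow> ('b \<Rightarrow> 'a) \<Rightarrow> bool" where
  "sg_generating S \<Sigma> \<pi> \<longleftrightarrow> \<pi> ` \<Sigma> \<subseteq> carrier S \<and> sg_eval S \<pi> ` words_plus \<Sigma> = carrier S"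

definition mon_generating :: "('a, 'm) monoid_scheme \<Rightarrow> 'b set \<Rightarrow> ('b \<Rightarrow> 'a) \<Rightarrow> bool" where
  "mon_generating S \<Sigma> \<pi> \<longleftrightarrow> \<pi> ` \<Sigma> \<subseteq> carrier S \<and> mon_eval S \<pi> ` words_star \<Sigma> = carrier S"

definition idem_problem_sg :: "('a, 'm) monoid_scheme \<Rightarrow> 'b set \<Rightarrow> ('b \<Rightarrow> 'a) \<Rightarrow> 'b list set" where
  "idem_problem_sg S \<Sigma> \<pi> = {w \<in> words_plus \<Sigma>. idempotent_in S (sg_eval S \<pi> w)}"

definition idem_problem_mon :: "('a, 'm) monoid_scheme \<Rightarrow> 'b set \<Rightarrow> ('b \<Rightarrow> 'a) \<Rightarrow> 'b list set" where
  "idem_problem_mon S \<Sigma> \<pi> = {w \<in> words_star \<Sigma>. idempotent_in S (mon_eval S \<pi> w)}"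

definition synt_cong :: "'b set \<Rightarrow> 'b list set \<Rightarrow> 'b list \<Rightarrow> 'b list \<Rightarrow> bool" where
  "synt_cong \<Sigma> L u v \<longleftrightarrow>
     (\<forall>x y. set x \<subseteq> \<Sigma> \<longrightarrow> set y \<subseteq> \<Sigma> \<longrightarrow> (x @ u @ y \<in> L \<longleftrightarrow> x @ v @ y \<in> L))"

definition synt_class :: "'b list set \<Rightarrow> 'b set \<Rightarrow> 'b list set \<Rightarrow> 'b list \<Rightarrow> 'b list set" where
  "synt_class W \<Sigma> L u = {v \<in> W. synt_cong \<Sigma> L u v}"

definition synt_semigroup :: "'b set \<Rightarrow> 'b list set \<Rightarrow> 'b list set monoid" where
  "synt_semigroup \<Sigma> L =
     \<lparr> carrier = synt_class (words_plus \<Sigma>) \<Sigma> L ` words_plus \<Sigma>,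
       mult = (\<lambda>A B. synt_class (words_plus \<Sigma>) \<Sigma> L ((SOME u. u \<in> A) @ (SOME v. v \<in> B))),
       one = undefined \<rparr>"

definition synt_monoid :: "'b set \<Rightarrow> 'b list set \<Rightarrow> 'b list set monoid" where
  "synt_monoid \<Sigma> L =
     \<lparr> carrier = synt_class (words_star \<Sigma>) \<Sigma> L ` words_star \<Sigma>,
       mult = (\<lambda>A B. synt_class (words_star \<Sigma>) \<Sigma> L ((SOME u. u \<in> A) @ (SOME v. v \<in> B))),
       one = synt_class (words_star \<Sigma>) \<Sigma> L [] \<rparr>"

end

theory Submission
  imports Defs
begin

text \<open>Two words are syntactically congruent for the idempotent problem iff their values s, t
  satisfy the same conditions "a s b is idempotent" for a, b in S^1, because every context a _ b
  of S^1 is the value of a context x _ y of words, and conversely. That relation is the syntactic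
  congruence of the set of idempotents of S and does not mention the generating set, so
  evaluation induces an isomorphism of M^+(L) onto the same quotient of S for every generating
  set.\<close>

text \<open>Unlike group.iso_sym, this needs only closure of G, so that the inverse map is a
  homomorphism.\<close>

lemma is_iso_sym:
  assumes "G \<cong> H"
    and closed: "\<And>x y. x \<in> carrier G \<Longrightarrow> y \<in> carrier G \<Longrightarrow> x \<otimes>\<^bsub>G\<^esub> y \<in> carrier G"
  shows "H \<cong> G"
proof -
  obtain h where hom: "h \<in> hom G H" and bij: "bij_betw h (carrier G) (carrier H)"
    using assms(1) by (auto simp: is_iso_def iso_def)
  let ?g = "inv_into (carrier G) h"
  have g_bij: "bij_betw ?g (carrier H) (carrier G)"
    using bij by (rule bij_betw_inv_into)
  have g_carrier: "?g x \<in> carrier G" if "x \<in> carrier H" for x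
    using g_bij that by (meson bij_betwE)
  have "?g (x \<otimes>\<^bsub>H\<^esub> y) = ?g x \<otimes>\<^bsub>G\<^esub> ?g y" if "x \<in> carrier H" "y \<in> carrier H" for x y
  proof (rule inv_into_f_eq)
    show "inj_on h (carrier G)"
      using bij by (rule bij_betw_imp_inj_on)
    show "?g x \<otimes>\<^bsub>G\<^esub> ?g y \<in> carrier G"
      using closed g_carrier that by blast
    show "h (?g x \<otimes>\<^bsub>G\<^esub> ?g y) = x \<otimes>\<^bsub>H\<^esub> y"
      using hom g_carrier that bij_betw_inv_into_right[OF bij] by (simp add: hom_def)
  qed
  then have "?g \<in> iso H G"
    using g_bij g_carrier by (auto simp: iso_def hom_def)
  then show ?thesis
    by (rule is_isoI)
qed

definition quot_class :: "'x set \<Rightarrow> ('x \<Rightarrow> 'x \<Rightarrow> bool) \<Rightarrow> 'x \<Rightarrow> 'x set" where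
  "quot_class X R x = {y \<in> X. R x y}"

locale quotient_magma =
  fixes M :: "('x set, 'n) monoid_scheme" and X :: "'x set"
    and R :: "'x \<Rightarrow> 'x \<Rightarrow> bool" and f :: "'x \<Rightarrow> 'x \<Rightarrow> 'x"
  assumes equivp: "equivp R"
    and closed: "\<And>x y. x \<in> X \<Longrightarrow> y \<in> X \<Longrightarrow> f x y \<in> X"
    and compatible: "\<And>x x' y y'. x \<in> X \<Longrightarrow> x' \<in> X \<Longrightarrow> y \<in> X \<Longrightarrow> y' \<in> X \<Longrightarrow>
      R x x' \<Longrightarrow> R y y' \<Longrightarrow> R (f x y) (f x' y')"
    and carrier_eq: "carrier M = quot_class X R ` X"
    and mult_eq: "\<And>A B. A \<otimes>\<^bsub>M\<^esub> B = quot_class X R (f (SOME x. x \<in> A) (SOME y. y \<in> B))"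
begin

lemma quot_class_eq_iff:
  assumes "x \<in> X" "y \<in> X"
  shows "quot_class X R x = quot_class X R y \<longleftrightarrow> R x y"
  using assms equivp_reflp[OF equivp] equivp_symp[OF equivp] equivp_transp[OF equivp]
  unfolding quot_class_def by blast

lemma some_in_quot_class:
  assumes "x \<in> X"
  shows "(SOME y. y \<in> quot_class X R x) \<in> X \<and> R x (SOME y. y \<in> quot_class X R x)"
proof -
  have "x \<in> quot_class X R x"
    using assms equivp_reflp[OF equivp] unfolding quot_class_def by blast
  then have "(SOME y. y \<in> quot_class X R x) \<in> quot_class X R x"
    by (rule someI)
  then show ?thesis
    unfolding quot_class_def by blast
qed

lemma mult_quot_class:
  assumes "x \<in> X" "y \<in> X"
  shows "quot_class X R x \<otimes>\<^bsub>M\<^esub> quot_class X R y = quot_class X R (f x y)"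
proof -
  obtain x' y' where "x' \<in> X" "R x x'" "y' \<in> X" "R y y'"
    and "quot_class X R x \<otimes>\<^bsub>M\<^esub> quot_class X R y = quot_class X R (f x' y')"
    using some_in_quot_class assms mult_eq by metis
  then show ?thesis
    using assms closed compatible quot_class_eq_iff equivp_symp[OF equivp] by metis
qed

lemma mult_closed:
  assumes "A \<in> carrier M" "B \<in> carrier M"
  shows "A \<otimes>\<^bsub>M\<^esub> B \<in> carrier M"
  using assms closed mult_quot_class unfolding carrier_eq by auto

end

lemma quotient_magma_iso:
  assumes M: "quotient_magma M X R f" and N: "quotient_magma N Y Q g"
    and surj: "e ` X = Y"
    and kernel: "\<And>x x'. x \<in> X \<Longrightarrow> x' \<in> X \<Longrightarrow> R x x' \<longleftrightarrow> Q (e x) (e x')"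
    and hom: "\<And>x x'. x \<in> X \<Longrightarrow> x' \<in> X \<Longrightarrow> e (f x x') = g (e x) (e x')"
  shows "M \<cong> N"
proof -
  interpret M: quotient_magma M X R f by (rule M)
  interpret N: quotient_magma N Y Q g by (rule N)
  define \<Phi> where "\<Phi> A = quot_class Y Q (e (SOME x. x \<in> A))" for A
  have e_in: "e x \<in> Y" if "x \<in> X" for x
    using surj that by blast
  have \<Phi>: "\<Phi> (quot_class X R x) = quot_class Y Q (e x)" if x: "x \<in> X" for x
    using M.some_in_quot_class[OF x] x kernel e_in N.quot_class_eq_iff
    unfolding \<Phi>_def by metis
  have "\<Phi> \<in> iso M N"
    unfolding iso_iff hom_def
  proof (intro conjI CollectI ballI)
    show "\<Phi> \<in> carrier M \<rightarrow> carrier N"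
      using \<Phi> e_in by (auto simp: M.carrier_eq N.carrier_eq)
    show "\<Phi> (A \<otimes>\<^bsub>M\<^esub> B) = \<Phi> A \<otimes>\<^bsub>N\<^esub> \<Phi> B" if "A \<in> carrier M" "B \<in> carrier M" for A B
      using that \<Phi> M.closed hom e_in by (auto simp: M.carrier_eq M.mult_quot_class N.mult_quot_class)
    show "\<Phi> ` carrier M = carrier N"
      using \<Phi> surj by (auto simp: M.carrier_eq N.carrier_eq image_image)
    show "inj_on \<Phi> (carrier M)"
      using \<Phi> kernel e_in by (auto simp: inj_on_def M.carrier_eq M.quot_class_eq_iff N.quot_class_eq_iff)
  qed
  then show ?thesis
    by (rule is_isoI)
qed

lemma synt_cong_equivp: "equivp (synt_cong \<Sigma> L)"
  by (rule equivpI; rule reflpI sympI transpI) (auto simp: synt_cong_def)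

lemma synt_cong_append:
  assumes "set u' \<subseteq> \<Sigma>" "set v \<subseteq> \<Sigma>" "synt_cong \<Sigma> L u u'" "synt_cong \<Sigma> L v v'"
  shows "synt_cong \<Sigma> L (u @ v) (u' @ v')"
  unfolding synt_cong_def
proof (intro allI impI)
  fix x y assume "set x \<subseteq> \<Sigma>" "set y \<subseteq> \<Sigma>"
  then have "x @ (u @ v) @ y \<in> L \<longleftrightarrow> x @ u' @ (v @ y) \<in> L"
    using assms(2,3) unfolding synt_cong_def by (metis append.assoc set_append sup.bounded_iff)
  also have "\<dots> \<longleftrightarrow> x @ (u' @ v') @ y \<in> L"
    using \<open>set x \<subseteq> \<Sigma>\<close> \<open>set y \<subseteq> \<Sigma>\<close> assms(1,4) unfolding synt_cong_def
    by (metis append.assoc set_append sup.bounded_iff)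
  finally show "x @ (u @ v) @ y \<in> L \<longleftrightarrow> x @ (u' @ v') @ y \<in> L" .
qed

lemma quot_class_synt_cong: "quot_class W (synt_cong \<Sigma> L) = synt_class W \<Sigma> L"
  by (auto simp: quot_class_def synt_class_def)

lemma quotient_magma_synt_semigroup:
  "quotient_magma (synt_semigroup \<Sigma> L) (words_plus \<Sigma>) (synt_cong \<Sigma> L) (@)"
  by unfold_locales
    (auto simp: synt_cong_equivp synt_cong_append quot_class_synt_cong synt_semigroup_def
      words_plus_def)

lemma quotient_magma_synt_monoid:
  "quotient_magma (synt_monoid \<Sigma> L) (words_star \<Sigma>) (synt_cong \<Sigma> L) (@)"
  by unfold_locales
    (auto simp: synt_cong_equivp synt_cong_append quot_class_synt_cong synt_monoid_def
      words_star_def)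

text \<open>Elements of S^1 are encoded as options, None being the adjoined identity.\<close>

definition carrier1 :: "('a, 'm) monoid_scheme \<Rightarrow> 'a option set" where
  "carrier1 S = insert None (Some ` carrier S)"

definition lmult1 :: "('a, 'm) monoid_scheme \<Rightarrow> 'a option \<Rightarrow> 'a \<Rightarrow> 'a" where
  "lmult1 S a s = (case a of None \<Rightarrow> s | Some c \<Rightarrow> c \<otimes>\<^bsub>S\<^esub> s)"

definition rmult1 :: "('a, 'm) monoid_scheme \<Rightarrow> 'a \<Rightarrow> 'a option \<Rightarrow> 'a" where
  "rmult1 S s b = (case b of None \<Rightarrow> s | Some c \<Rightarrow> s \<otimes>\<^bsub>S\<^esub> c)"

definition idem_cong :: "('a, 'm) monoid_scheme \<Rightarrow> 'a \<Rightarrow> 'a \<Rightarrow> bool" where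
  "idem_cong S s t \<longleftrightarrow> (\<forall>a\<in>carrier1 S. \<forall>b\<in>carrier1 S.
     idempotent_in S (lmult1 S a (rmult1 S s b)) \<longleftrightarrow> idempotent_in S (lmult1 S a (rmult1 S t b)))"

definition idem_quotient :: "('a, 'm) monoid_scheme \<Rightarrow> 'a set monoid" where
  "idem_quotient S =
     \<lparr> carrier = quot_class (carrier S) (idem_cong S) ` carrier S,
       mult = (\<lambda>A B. quot_class (carrier S) (idem_cong S) ((SOME s. s \<in> A) \<otimes>\<^bsub>S\<^esub> (SOME t. t \<in> B))),
       one = undefined \<rparr>"

lemma is_semigroup_closed:
  "is_semigroup S \<Longrightarrow> x \<in> carrier S \<Longrightarrow> y \<in> carrier S \<Longrightarrow> x \<otimes>\<^bsub>S\<^esub> y \<in> carrier S"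
  unfolding is_semigroup_def by blast

lemma is_semigroup_assoc:
  "is_semigroup S \<Longrightarrow> x \<in> carrier S \<Longrightarrow> y \<in> carrier S \<Longrightarrow> z \<in> carrier S \<Longrightarrow>
    (x \<otimes>\<^bsub>S\<^esub> y) \<otimes>\<^bsub>S\<^esub> z = x \<otimes>\<^bsub>S\<^esub> (y \<otimes>\<^bsub>S\<^esub> z)"
  unfolding is_semigroup_def by blast

lemma idem_congD:
  "idem_cong S s t \<Longrightarrow> a \<in> carrier1 S \<Longrightarrow> b \<in> carrier1 S \<Longrightarrow>
    idempotent_in S (lmult1 S a (rmult1 S s b)) \<longleftrightarrow> idempotent_in S (lmult1 S a (rmult1 S t b))"
  unfolding idem_cong_def by blast

lemma idem_cong_equivp: "equivp (idem_cong S)"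
  by (rule equivpI; rule reflpI sympI transpI) (auto simp: idem_cong_def)

lemma rmult1_mult:
  "is_semigroup S \<Longrightarrow> b \<in> carrier1 S \<Longrightarrow> s \<in> carrier S \<Longrightarrow> t \<in> carrier S \<Longrightarrow>
    rmult1 S (s \<otimes>\<^bsub>S\<^esub> t) b = rmult1 S s (Some (rmult1 S t b))"
  by (auto simp: carrier1_def rmult1_def is_semigroup_assoc)

lemma lmult1_rmult1_mult:
  "is_semigroup S \<Longrightarrow> a \<in> carrier1 S \<Longrightarrow> b \<in> carrier1 S \<Longrightarrow> s \<in> carrier S \<Longrightarrow>
    t \<in> carrier S \<Longrightarrow>
    lmult1 S a (rmult1 S (s \<otimes>\<^bsub>S\<^esub> t) b) = lmult1 S (Some (lmult1 S a s)) (rmult1 S t b)"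
  by (auto simp: carrier1_def lmult1_def rmult1_def is_semigroup_assoc is_semigroup_closed)

lemma Some_lmult1_in_carrier1:
  "is_semigroup S \<Longrightarrow> a \<in> carrier1 S \<Longrightarrow> s \<in> carrier S \<Longrightarrow> Some (lmult1 S a s) \<in> carrier1 S"
  by (auto simp: carrier1_def lmult1_def is_semigroup_closed)

lemma Some_rmult1_in_carrier1:
  "is_semigroup S \<Longrightarrow> b \<in> carrier1 S \<Longrightarrow> s \<in> carrier S \<Longrightarrow> Some (rmult1 S s b) \<in> carrier1 S"
  by (auto simp: carrier1_def rmult1_def is_semigroup_closed)

text \<open>Multiplying by t on the right turns the context a _ b of s t into the context a _ t b
  of s, and symmetrically on the left.\<close>

lemma idem_cong_mult:
  assumes S: "is_semigroup S"
    and carrier: "s \<in> carrier S" "s' \<in> carrier S" "t \<in> carrier S" "t' \<in> carrier S"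
    and cong: "idem_cong S s s'" "idem_cong S t t'"
  shows "idem_cong S (s \<otimes>\<^bsub>S\<^esub> t) (s' \<otimes>\<^bsub>S\<^esub> t')"
proof -
  have "idem_cong S (s \<otimes>\<^bsub>S\<^esub> t) (s' \<otimes>\<^bsub>S\<^esub> t)"
    unfolding idem_cong_def
  proof (intro ballI)
    fix a b assume a: "a \<in> carrier1 S" and b: "b \<in> carrier1 S"
    show "idempotent_in S (lmult1 S a (rmult1 S (s \<otimes>\<^bsub>S\<^esub> t) b)) \<longleftrightarrow>
          idempotent_in S (lmult1 S a (rmult1 S (s' \<otimes>\<^bsub>S\<^esub> t) b))"
      unfolding rmult1_mult[OF S b carrier(1,3)] rmult1_mult[OF S b carrier(2,3)]
      using idem_congD[OF cong(1) a Some_rmult1_in_carrier1[OF S b carrier(3)]] .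
  qed
  moreover have "idem_cong S (s' \<otimes>\<^bsub>S\<^esub> t) (s' \<otimes>\<^bsub>S\<^esub> t')"
    unfolding idem_cong_def
  proof (intro ballI)
    fix a b assume a: "a \<in> carrier1 S" and b: "b \<in> carrier1 S"
    show "idempotent_in S (lmult1 S a (rmult1 S (s' \<otimes>\<^bsub>S\<^esub> t) b)) \<longleftrightarrow>
          idempotent_in S (lmult1 S a (rmult1 S (s' \<otimes>\<^bsub>S\<^esub> t') b))"
      unfolding lmult1_rmult1_mult[OF S a b carrier(2,3)] lmult1_rmult1_mult[OF S a b carrier(2,4)]
      using idem_congD[OF cong(2) Some_lmult1_in_carrier1[OF S a carrier(2)] b] .
  qed
  ultimately show ?thesis
    by (rule equivp_transp[OF idem_cong_equivp])
qed

lemma quotient_magma_idem_quotient: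
  assumes S: "is_semigroup S"
  shows "quotient_magma (idem_quotient S) (carrier S) (idem_cong S) (mult S)"
proof
  show "equivp (idem_cong S)" by (rule idem_cong_equivp)
  show "x \<otimes>\<^bsub>S\<^esub> y \<in> carrier S" if "x \<in> carrier S" "y \<in> carrier S" for x y
    using S that by (rule is_semigroup_closed)
  show "idem_cong S (x \<otimes>\<^bsub>S\<^esub> y) (x' \<otimes>\<^bsub>S\<^esub> y')"
    if "x \<in> carrier S" "x' \<in> carrier S" "y \<in> carrier S" "y' \<in> carrier S"
      "idem_cong S x x'" "idem_cong S y y'" for x x' y y'
    using S that by (rule idem_cong_mult)
qed (simp_all add: idem_quotient_def)

locale word_presentation =
  fixes S :: "('a, 'm) monoid_scheme" and \<Sigma> :: "'b set"
    and W :: "'b list set" and E :: "'b list \<Rightarrow> 'a"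
  assumes semigroup: "is_semigroup S"
    and eval_surj: "E ` W = carrier S"
    and eval_append: "\<And>u v. u \<in> W \<Longrightarrow> v \<in> W \<Longrightarrow> E (u @ v) = E u \<otimes>\<^bsub>S\<^esub> E v"
    and context_closed: "\<And>x y u. x \<in> words_star \<Sigma> \<Longrightarrow> y \<in> words_star \<Sigma> \<Longrightarrow> u \<in> W \<Longrightarrow>
      x @ u @ y \<in> W"
    and word_context: "\<And>x y. x \<in> words_star \<Sigma> \<Longrightarrow> y \<in> words_star \<Sigma> \<Longrightarrow>
      \<exists>a\<in>carrier1 S. \<exists>b\<in>carrier1 S. \<forall>u\<in>W. E (x @ u @ y) = lmult1 S a (rmult1 S (E u) b)"
    and context_word: "\<And>a b. a \<in> carrier1 S \<Longrightarrow> b \<in> carrier1 S \<Longrightarrow>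
      \<exists>x\<in>words_star \<Sigma>. \<exists>y\<in>words_star \<Sigma>. \<forall>u\<in>W. E (x @ u @ y) = lmult1 S a (rmult1 S (E u) b)"
begin

lemma synt_cong_iff_idem_cong:
  assumes u: "u \<in> W" and v: "v \<in> W"
  shows "synt_cong \<Sigma> {w \<in> W. idempotent_in S (E w)} u v \<longleftrightarrow> idem_cong S (E u) (E v)"
    (is "synt_cong \<Sigma> ?L u v \<longleftrightarrow> _")
proof
  assume cong: "synt_cong \<Sigma> ?L u v"
  show "idem_cong S (E u) (E v)"
    unfolding idem_cong_def
  proof (intro ballI)
    fix a b assume "a \<in> carrier1 S" "b \<in> carrier1 S"
    then obtain x y where xy: "x \<in> words_star \<Sigma>" "y \<in> words_star \<Sigma>"
      and ctx: "\<And>w. w \<in> W \<Longrightarrow> E (x @ w @ y) = lmult1 S a (rmult1 S (E w) b)"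
      using context_word by blast
    have "x @ u @ y \<in> ?L \<longleftrightarrow> x @ v @ y \<in> ?L"
      using cong xy unfolding synt_cong_def words_star_def by blast
    then show "idempotent_in S (lmult1 S a (rmult1 S (E u) b)) \<longleftrightarrow>
               idempotent_in S (lmult1 S a (rmult1 S (E v) b))"
      using context_closed[OF xy] u v by (simp add: ctx)
  qed
next
  assume cong: "idem_cong S (E u) (E v)"
  show "synt_cong \<Sigma> ?L u v"
    unfolding synt_cong_def
  proof (intro allI impI)
    fix x y assume "set x \<subseteq> \<Sigma>" "set y \<subseteq> \<Sigma>"
    then have xy: "x \<in> words_star \<Sigma>" "y \<in> words_star \<Sigma>"
      by (simp_all add: words_star_def)
    then obtain a b where ab: "a \<in> carrier1 S" "b \<in> carrier1 S"
      and ctx: "\<And>w. w \<in> W \<Longrightarrow> E (x @ w @ y) = lmult1 S a (rmult1 S (E w) b)"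
      using word_context by blast
    show "x @ u @ y \<in> ?L \<longleftrightarrow> x @ v @ y \<in> ?L"
      using idem_congD[OF cong ab] context_closed[OF xy] u v by (simp add: ctx)
  qed
qed

lemma synt_quotient_iso_idem_quotient:
  assumes "quotient_magma M W (synt_cong \<Sigma> {w \<in> W. idempotent_in S (E w)}) (@)"
  shows "M \<cong> idem_quotient S"
proof (rule quotient_magma_iso)
  show "quotient_magma M W (synt_cong \<Sigma> {w \<in> W. idempotent_in S (E w)}) (@)" by (rule assms)
  show "quotient_magma (idem_quotient S) (carrier S) (idem_cong S) (mult S)"
    by (rule quotient_magma_idem_quotient[OF semigroup])
  show "E ` W = carrier S" by (rule eval_surj)
qed (simp_all add: synt_cong_iff_idem_cong eval_append)

end

lemma sg_eval_Cons: "w \<noteq> [] \<Longrightarrow> sg_eval S \<pi> (a # w) = \<pi> a \<otimes>\<^bsub>S\<^esub> sg_eval S \<pi> w"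
  by (cases w) simp_all

lemma sg_eval_in_carrier:
  assumes S: "is_semigroup S" and \<pi>: "\<pi> ` \<Sigma> \<subseteq> carrier S"
  shows "w \<in> words_plus \<Sigma> \<Longrightarrow> sg_eval S \<pi> w \<in> carrier S"
proof (induction w)
  case (Cons a w)
  then show ?case
    using \<pi> by (cases "w = []") (auto simp: words_plus_def sg_eval_Cons is_semigroup_closed[OF S])
qed (simp add: words_plus_def)

lemma sg_eval_append:
  assumes S: "is_semigroup S" and \<pi>: "\<pi> ` \<Sigma> \<subseteq> carrier S"
  shows "u \<in> words_plus \<Sigma> \<Longrightarrow> v \<in> words_plus \<Sigma> \<Longrightarrow>
    sg_eval S \<pi> (u @ v) = sg_eval S \<pi> u \<otimes>\<^bsub>S\<^esub> sg_eval S \<pi> v"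
proof (induction u)
  case (Cons a u)
  show ?case
  proof (cases "u = []")
    case False
    then have "u \<in> words_plus \<Sigma>" "a \<in> \<Sigma>"
      using Cons.prems by (auto simp: words_plus_def)
    then show ?thesis
      using False Cons \<pi> sg_eval_in_carrier[OF S \<pi>]
      by (simp add: sg_eval_Cons is_semigroup_assoc[OF S] image_subset_iff)
  qed (use Cons.prems in \<open>simp add: sg_eval_Cons words_plus_def\<close>)
qed (simp add: words_plus_def)

text \<open>The empty context word plays the role of the adjoined identity.\<close>

lemma word_presentation_sg_eval:
  assumes S: "is_semigroup S" and gen: "sg_generating S \<Sigma> \<pi>"
  shows "word_presentation S \<Sigma> (words_plus \<Sigma>) (sg_eval S \<pi>)"
proof -
  have \<pi>: "\<pi> ` \<Sigma> \<subseteq> carrier S" and surj: "sg_eval S \<pi> ` words_plus \<Sigma> = carrier S"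
    using gen by (auto simp: sg_generating_def)
  define ctx where "ctx x = (if x = [] then None else Some (sg_eval S \<pi> x))" for x
  have plus: "x \<in> words_plus \<Sigma>" if "x \<in> words_star \<Sigma>" "x \<noteq> []" for x
    using that by (simp add: words_plus_def words_star_def)
  have ctx_in: "ctx x \<in> carrier1 S" if "x \<in> words_star \<Sigma>" for x
    using that plus sg_eval_in_carrier[OF S \<pi>] by (auto simp: ctx_def carrier1_def)
  have ctx_surj: "\<exists>x\<in>words_star \<Sigma>. ctx x = a" if a: "a \<in> carrier1 S" for a
  proof (cases a)
    case None
    then show ?thesis by (auto simp: ctx_def words_star_def)
  next
    case (Some c)
    then obtain w where "w \<in> words_plus \<Sigma>" "sg_eval S \<pi> w = c"
      using a surj by (force simp: carrier1_def)
    then show ?thesis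
      using Some by (intro bexI[of _ w]) (auto simp: ctx_def words_plus_def words_star_def)
  qed
  have eval_context: "x @ u @ y \<in> words_plus \<Sigma> \<and>
      sg_eval S \<pi> (x @ u @ y) = lmult1 S (ctx x) (rmult1 S (sg_eval S \<pi> u) (ctx y))"
    if x: "x \<in> words_star \<Sigma>" and y: "y \<in> words_star \<Sigma>" and u: "u \<in> words_plus \<Sigma>" for x y u
  proof -
    have uy: "u @ y \<in> words_plus \<Sigma> \<and> sg_eval S \<pi> (u @ y) = rmult1 S (sg_eval S \<pi> u) (ctx y)"
      using u y plus[OF y] sg_eval_append[OF S \<pi> u]
      by (cases "y = []") (auto simp: ctx_def rmult1_def words_plus_def words_star_def)
    show ?thesis
      using uy x plus[OF x] sg_eval_append[OF S \<pi>, of x "u @ y"]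
      by (cases "x = []") (auto simp: ctx_def lmult1_def words_plus_def words_star_def)
  qed
  show ?thesis
  proof
    show "x @ u @ y \<in> words_plus \<Sigma>"
      if "x \<in> words_star \<Sigma>" "y \<in> words_star \<Sigma>" "u \<in> words_plus \<Sigma>" for x y u
      using eval_context that by blast
    show "\<exists>a\<in>carrier1 S. \<exists>b\<in>carrier1 S. \<forall>u\<in>words_plus \<Sigma>.
        sg_eval S \<pi> (x @ u @ y) = lmult1 S a (rmult1 S (sg_eval S \<pi> u) b)"
      if "x \<in> words_star \<Sigma>" "y \<in> words_star \<Sigma>" for x y
      using eval_context ctx_in that by blast
    show "\<exists>x\<in>words_star \<Sigma>. \<exists>y\<in>words_star \<Sigma>. \<forall>u\<in>words_plus \<Sigma>.
        sg_eval S \<pi> (x @ u @ y) = lmult1 S a (rmult1 S (sg_eval S \<pi> u) b)"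
      if "a \<in> carrier1 S" "b \<in> carrier1 S" for a b
      using eval_context ctx_surj that by metis
  qed (use S surj sg_eval_append[OF S \<pi>] in auto)
qed

lemma mon_eval_Nil [simp]: "mon_eval S \<pi> [] = \<one>\<^bsub>S\<^esub>"
  by (simp add: mon_eval_def)

lemma mon_eval_Cons [simp]: "mon_eval S \<pi> (a # w) = \<pi> a \<otimes>\<^bsub>S\<^esub> mon_eval S \<pi> w"
  by (simp add: mon_eval_def)

lemma mon_eval_in_carrier:
  assumes S: "monoid S" and \<pi>: "\<pi> ` \<Sigma> \<subseteq> carrier S"
  shows "w \<in> words_star \<Sigma> \<Longrightarrow> mon_eval S \<pi> w \<in> carrier S"
  by (induction w) (use \<pi> in \<open>auto simp: words_star_def monoid.m_closed[OF S] monoid.one_closed[OF S]\<close>)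

lemma mon_eval_append:
  assumes S: "monoid S" and \<pi>: "\<pi> ` \<Sigma> \<subseteq> carrier S"
  shows "u \<in> words_star \<Sigma> \<Longrightarrow> v \<in> words_star \<Sigma> \<Longrightarrow>
    mon_eval S \<pi> (u @ v) = mon_eval S \<pi> u \<otimes>\<^bsub>S\<^esub> mon_eval S \<pi> v"
  by (induction u)
    (use \<pi> mon_eval_in_carrier[OF S \<pi>] in \<open>auto simp: words_star_def monoid.l_one[OF S]
      monoid.m_assoc[OF S]\<close>)

lemma monoid_is_semigroup: "monoid S \<Longrightarrow> is_semigroup S"
  by (auto simp: is_semigroup_def monoid.m_closed monoid.m_assoc)

text \<open>Multiplication by the value of the empty word realises the adjoined identity.\<close>

lemma word_presentation_mon_eval:
  assumes S: "monoid S" and gen: "mon_generating S \<Sigma> \<pi>"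
  shows "word_presentation S \<Sigma> (words_star \<Sigma>) (mon_eval S \<pi>)"
proof -
  have \<pi>: "\<pi> ` \<Sigma> \<subseteq> carrier S" and surj: "mon_eval S \<pi> ` words_star \<Sigma> = carrier S"
    using gen by (auto simp: mon_generating_def)
  note eval_in = mon_eval_in_carrier[OF S \<pi>] and eval_append = mon_eval_append[OF S \<pi>]
  have closed: "x @ u \<in> words_star \<Sigma>" if "x \<in> words_star \<Sigma>" "u \<in> words_star \<Sigma>" for x u
    using that by (simp add: words_star_def)
  have eval_context: "mon_eval S \<pi> (x @ u @ y) =
      lmult1 S (Some (mon_eval S \<pi> x)) (rmult1 S (mon_eval S \<pi> u) (Some (mon_eval S \<pi> y)))"
    if "x \<in> words_star \<Sigma>" "y \<in> words_star \<Sigma>" "u \<in> words_star \<Sigma>" for x y u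
    using that closed eval_in by (simp add: eval_append lmult1_def rmult1_def)
  have word_realises: "\<exists>x\<in>words_star \<Sigma>. \<forall>s\<in>carrier S.
      mon_eval S \<pi> x \<otimes>\<^bsub>S\<^esub> s = lmult1 S a s \<and> s \<otimes>\<^bsub>S\<^esub> mon_eval S \<pi> x = rmult1 S s a"
    if a: "a \<in> carrier1 S" for a
  proof (cases a)
    case None
    then show ?thesis
      using S by (intro bexI[of _ "[]"]) (auto simp: words_star_def lmult1_def rmult1_def
          monoid.l_one monoid.r_one)
  next
    case (Some c)
    then obtain w where "w \<in> words_star \<Sigma>" "mon_eval S \<pi> w = c"
      using a surj by (force simp: carrier1_def)
    then show ?thesis
      using Some by (auto simp: lmult1_def rmult1_def)
  qed
  show ?thesis
  proof
    show "\<exists>a\<in>carrier1 S. \<exists>b\<in>carrier1 S. \<forall>u\<in>words_star \<Sigma>.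
        mon_eval S \<pi> (x @ u @ y) = lmult1 S a (rmult1 S (mon_eval S \<pi> u) b)"
      if "x \<in> words_star \<Sigma>" "y \<in> words_star \<Sigma>" for x y
    proof -
      have "Some (mon_eval S \<pi> x) \<in> carrier1 S" "Some (mon_eval S \<pi> y) \<in> carrier1 S"
        using that eval_in by (simp_all add: carrier1_def)
      then show ?thesis
        using that eval_context by blast
    qed
    show "\<exists>x\<in>words_star \<Sigma>. \<exists>y\<in>words_star \<Sigma>. \<forall>u\<in>words_star \<Sigma>.
        mon_eval S \<pi> (x @ u @ y) = lmult1 S a (rmult1 S (mon_eval S \<pi> u) b)"
      if a: "a \<in> carrier1 S" and b: "b \<in> carrier1 S" for a b
    proof -
      obtain x where x: "x \<in> words_star \<Sigma>"
        and left: "\<forall>s\<in>carrier S. mon_eval S \<pi> x \<otimes>\<^bsub>S\<^esub> s = lmult1 S a s"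
        using word_realises[OF a] by blast
      obtain y where y: "y \<in> words_star \<Sigma>"
        and right: "\<forall>s\<in>carrier S. s \<otimes>\<^bsub>S\<^esub> mon_eval S \<pi> y = rmult1 S s b"
        using word_realises[OF b] by blast
      have "mon_eval S \<pi> (x @ u @ y) = lmult1 S a (rmult1 S (mon_eval S \<pi> u) b)"
        if u: "u \<in> words_star \<Sigma>" for u
      proof -
        have "rmult1 S (mon_eval S \<pi> u) b \<in> carrier S"
          using Some_rmult1_in_carrier1[OF monoid_is_semigroup[OF S] b eval_in[OF u]]
          by (auto simp: carrier1_def)
        then show ?thesis
          using x y u left right closed eval_in by (simp add: eval_append)
      qed
      then show ?thesis
        using x y by blast
    qed
  qed (use monoid_is_semigroup[OF S] surj closed eval_append in auto)
qed

theorem synt_semigroup_iso_idem_quotient: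
  assumes "is_semigroup S" and "sg_generating S \<Sigma> \<pi>"
  shows "synt_semigroup \<Sigma> (idem_problem_sg S \<Sigma> \<pi>) \<cong> idem_quotient S"
proof -
  interpret word_presentation S \<Sigma> "words_plus \<Sigma>" "sg_eval S \<pi>"
    using assms by (rule word_presentation_sg_eval)
  show ?thesis
    unfolding idem_problem_sg_def
    by (rule synt_quotient_iso_idem_quotient[OF quotient_magma_synt_semigroup])
qed

theorem synt_monoid_iso_idem_quotient:
  assumes "monoid S" and "mon_generating S \<Sigma> \<pi>"
  shows "synt_monoid \<Sigma> (idem_problem_mon S \<Sigma> \<pi>) \<cong> idem_quotient S"
proof -
  interpret word_presentation S \<Sigma> "words_star \<Sigma>" "mon_eval S \<pi>"
    using assms by (rule word_presentation_mon_eval)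
  show ?thesis
    unfolding idem_problem_mon_def
    by (rule synt_quotient_iso_idem_quotient[OF quotient_magma_synt_monoid])
qed

lemma synt_semigroup_mult_closed:
  "A \<in> carrier (synt_semigroup \<Sigma> L) \<Longrightarrow> B \<in> carrier (synt_semigroup \<Sigma> L) \<Longrightarrow>
    A \<otimes>\<^bsub>synt_semigroup \<Sigma> L\<^esub> B \<in> carrier (synt_semigroup \<Sigma> L)"
  by (rule quotient_magma.mult_closed[OF quotient_magma_synt_semigroup])

lemma synt_monoid_mult_closed:
  "A \<in> carrier (synt_monoid \<Sigma> L) \<Longrightarrow> B \<in> carrier (synt_monoid \<Sigma> L) \<Longrightarrow>
    A \<otimes>\<^bsub>synt_monoid \<Sigma> L\<^esub> B \<in> carrier (synt_monoid \<Sigma> L)"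
  by (rule quotient_magma.mult_closed[OF quotient_magma_synt_monoid])

theorem corollary5:
  fixes I J :: "('a, 'm) monoid_scheme"
    and \<Sigma>1 :: "'b set" and \<pi>1 :: "'b \<Rightarrow> 'a"
    and \<Sigma>2 :: "'c set" and \<pi>2 :: "'c \<Rightarrow> 'a"
    and \<Delta>1 :: "'b set" and \<rho>1 :: "'b \<Rightarrow> 'a"
    and \<Delta>2 :: "'c set" and \<rho>2 :: "'c \<Rightarrow> 'a"
  shows
    "(inverse_semigroup I \<and> sg_generating I \<Sigma>1 \<pi>1 \<and> sg_generating I \<Sigma>2 \<pi>2 \<longrightarrow>
        synt_semigroup \<Sigma>1 (idem_problem_sg I \<Sigma>1 \<pi>1)
          \<cong> synt_semigroup \<Sigma>2 (idem_problem_sg I \<Sigma>2 \<pi>2))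
     \<and>
     (inverse_monoid J \<and> mon_generating J \<Delta>1 \<rho>1 \<and> mon_generating J \<Delta>2 \<rho>2 \<longrightarrow>
        synt_monoid \<Delta>1 (idem_problem_mon J \<Delta>1 \<rho>1)
          \<cong> synt_monoid \<Delta>2 (idem_problem_mon J \<Delta>2 \<rho>2))"
proof (intro conjI impI; elim conjE)
  assume I: "inverse_semigroup I" and gen: "sg_generating I \<Sigma>1 \<pi>1" "sg_generating I \<Sigma>2 \<pi>2"
  have I: "is_semigroup I"
    using I by (simp add: inverse_semigroup_def)
  show "synt_semigroup \<Sigma>1 (idem_problem_sg I \<Sigma>1 \<pi>1) \<cong> synt_semigroup \<Sigma>2 (idem_problem_sg I \<Sigma>2 \<pi>2)"
    by (rule iso_trans[OF synt_semigroup_iso_idem_quotient[OF I gen(1)]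
          is_iso_sym[OF synt_semigroup_iso_idem_quotient[OF I gen(2)] synt_semigroup_mult_closed]])
next
  assume J: "inverse_monoid J" and gen: "mon_generating J \<Delta>1 \<rho>1" "mon_generating J \<Delta>2 \<rho>2"
  have J: "monoid J"
    using J by (simp add: inverse_monoid_def)
  show "synt_monoid \<Delta>1 (idem_problem_mon J \<Delta>1 \<rho>1) \<cong> synt_monoid \<Delta>2 (idem_problem_mon J \<Delta>2 \<rho>2)"
    by (rule iso_trans[OF synt_monoid_iso_idem_quotient[OF J gen(1)]
          is_iso_sym[OF synt_monoid_iso_idem_quotient[OF J gen(2)] synt_monoid_mult_closed]])
qed

end
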